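(* Let $G$ be a BDH graph with color classes $X$ and $Y$ and with no universal vertex, and let $\mathcal{B}(G)$ be its set of maximal bicliques. Let $\mathcal{X}_G=(X(B)\mid B\in\mathcal{B}(G))$ and $\mathcal{Y}_G=(Y(B)\mid B\in\mathcal{B}(G))$, regarded as families (hypergraphs) on $X$ and on $Y$ respectively. Then the incidence bipartite graphs $\Gamma(\mathcal{X}_G)$ and $\Gamma(\mathcal{Y}_G)$ are BDH graphs.
   Context: A biclique of a bipartite graph is a vertex set $B$ inducing a complete bipartite subgraph, with shores $X(B)=B\cap X$, $Y(B)=B\cap Y$; $\mathcal{B}(G)$ is the set of inclusion-wise maximal bicliques. For a family $\mathcal{H}$ of subsets of a ground set $V$, $\Gamma(\mathcal{H})$ is the bipartite graph with color classes $V$ and $\mathcal{H}$ (one vertex per member of the family), in which $v\in V$ is adjacent to $F\in\mathcal{H}$ iff $v\in F$. A universal vertex is one adjacent to all vertices of the opposite color class. A graph is distance hereditary if distances in every connected induced subgraph equal distances in the graph; BDH means bipartite distance hereditary (equivalently: bipartite, with no induced chordless cycle of length $\ge6$ and no induced domino, a domino being $C_6$ plus one chord between antipodal vertices). *)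

theory Defs
  imports Main
begin

definition walk_len :: "('a \<Rightarrow> 'a \<Rightarrow> bool) \<Rightarrow> 'a set \<Rightarrow> 'a \<Rightarrow> 'a \<Rightarrow> nat \<Rightarrow> bool" where
  "walk_len E S u v n \<longleftrightarrow> (\<exists>ps. length ps = Suc n \<and> hd ps = u \<and> last ps = v \<and> set ps \<subseteq> S
      \<and> (\<forall>i<n. E (ps ! i) (ps ! Suc i)))"

definition dist_in :: "('a \<Rightarrow> 'a \<Rightarrow> bool) \<Rightarrow> 'a set \<Rightarrow> 'a \<Rightarrow> 'a \<Rightarrow> nat" where
  "dist_in E S u v = (LEAST n. walk_len E S u v n)"

definition connected_in :: "('a \<Rightarrow> 'a \<Rightarrow> bool) \<Rightarrow> 'a set \<Rightarrow> bool" where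
  "connected_in E S \<longleftrightarrow> (\<forall>u\<in>S. \<forall>v\<in>S. \<exists>n. walk_len E S u v n)"

definition distance_hereditary :: "'a set \<Rightarrow> ('a \<Rightarrow> 'a \<Rightarrow> bool) \<Rightarrow> bool" where
  "distance_hereditary V E \<longleftrightarrow>
     (\<forall>S\<subseteq>V. connected_in E S \<longrightarrow> (\<forall>u\<in>S. \<forall>v\<in>S. dist_in E S u v = dist_in E V u v))"

definition bipartite_graph :: "'a set \<Rightarrow> 'a set \<Rightarrow> ('a \<Rightarrow> 'a \<Rightarrow> bool) \<Rightarrow> bool" where
  "bipartite_graph X Y E \<longleftrightarrow> finite X \<and> finite Y \<and> X \<inter> Y = {}
     \<and> (\<forall>u v. E u v \<longrightarrow> E v u)
     \<and> (\<forall>u v. E u v \<longrightarrow> (u \<in> X \<and> v \<in> Y) \<or> (u \<in> Y \<and> v \<in> X))"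

definition BDH :: "'a set \<Rightarrow> 'a set \<Rightarrow> ('a \<Rightarrow> 'a \<Rightarrow> bool) \<Rightarrow> bool" where
  "BDH X Y E \<longleftrightarrow> bipartite_graph X Y E \<and> distance_hereditary (X \<union> Y) E"

definition biclique :: "'a set \<Rightarrow> 'a set \<Rightarrow> ('a \<Rightarrow> 'a \<Rightarrow> bool) \<Rightarrow> 'a set \<Rightarrow> bool" where
  "biclique X Y E B \<longleftrightarrow> B \<subseteq> X \<union> Y \<and> B \<inter> X \<noteq> {} \<and> B \<inter> Y \<noteq> {}
     \<and> (\<forall>x\<in>B \<inter> X. \<forall>y\<in>B \<inter> Y. E x y)"

definition max_bicliques :: "'a set \<Rightarrow> 'a set \<Rightarrow> ('a \<Rightarrow> 'a \<Rightarrow> bool) \<Rightarrow> 'a set set" where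
  "max_bicliques X Y E = {B. biclique X Y E B \<and> \<not> (\<exists>B'. biclique X Y E B' \<and> B \<subset> B')}"

definition universal_vertex :: "'a set \<Rightarrow> 'a set \<Rightarrow> ('a \<Rightarrow> 'a \<Rightarrow> bool) \<Rightarrow> 'a \<Rightarrow> bool" where
  "universal_vertex X Y E v \<longleftrightarrow> (v \<in> X \<and> (\<forall>y\<in>Y. E v y)) \<or> (v \<in> Y \<and> (\<forall>x\<in>X. E v x))"

text \<open>Incidence bipartite graph Gamma of the family (F i | i \<in> I) on ground set V:
  colour classes Inl ` V and Inr ` I (one vertex per index), Inl v adjacent to Inr i iff v \<in> F i.\<close>
fun Gamma_adj :: "'a set \<Rightarrow> 'i set \<Rightarrow> ('i \<Rightarrow> 'a set) \<Rightarrow> 'a + 'i \<Rightarrow> 'a + 'i \<Rightarrow> bool" where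
  "Gamma_adj V I F (Inl v) (Inr i) = (v \<in> V \<and> i \<in> I \<and> v \<in> F i)"
| "Gamma_adj V I F (Inr i) (Inl v) = (v \<in> V \<and> i \<in> I \<and> v \<in> F i)"
| "Gamma_adj V I F _ _ = False"

end

theory Submission
  imports Defs
begin

text \<open>
  Write \<open>\<Gamma>\<close> for the incidence graph of the family \<open>(X(B) | B \<in> \<B>(G))\<close>. A graph is distance
  hereditary iff each of its induced paths is a geodesic, and this is shown for \<open>\<Gamma>\<close> by induction
  on the length of the path. Let \<open>P\<close> be an induced path of \<open>\<Gamma>\<close> of length at least 3 whose proper
  subpaths are geodesics. Two vertices of \<open>X\<close> with a common neighbour in \<open>G\<close> lie in a common
  maximal biclique, so they are at distance 2 in \<open>\<Gamma>\<close> and hence at most two steps apart on \<open>P\<close>.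
  Consequently a vertex of \<open>B \<inter> Y\<close>, for a biclique \<open>B\<close> on \<open>P\<close>, is adjacent to at most one vertex of
  \<open>P\<close> besides the path neighbours of \<open>B\<close>, and by maximality of \<open>B\<close> some vertex of \<open>B \<inter> Y\<close> avoids
  that one as well. Replacing every biclique on \<open>P\<close> by such a representative turns \<open>P\<close> into an
  induced path of \<open>G\<close> of the same length, which is a geodesic because \<open>G\<close> is distance hereditary.
  Walks of \<open>\<Gamma>\<close> project to walks of \<open>G\<close> of the same length, so \<open>P\<close> is a geodesic as well.
  The claim for \<open>(Y(B) | B \<in> \<B>(G))\<close> follows by exchanging the roles of \<open>X\<close> and \<open>Y\<close>.
\<close>

section \<open>Walks, induced paths and geodesics\<close>

inductive walk :: "('a \<Rightarrow> 'a \<Rightarrow> bool) \<Rightarrow> 'a set \<Rightarrow> 'a \<Rightarrow> 'a \<Rightarrow> nat \<Rightarrow> bool"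
  for E S where
  walk_refl: "u \<in> S \<Longrightarrow> walk E S u u 0"
| walk_step: "u \<in> S \<Longrightarrow> E u w \<Longrightarrow> walk E S w v n \<Longrightarrow> walk E S u v (Suc n)"

lemma walk_endpoints: "walk E S u v n \<Longrightarrow> u \<in> S \<and> v \<in> S"
  by (induct rule: walk.induct) auto

lemma walk_trans: "walk E S u w m \<Longrightarrow> walk E S w v n \<Longrightarrow> walk E S u v (m + n)"
  by (induct rule: walk.induct) (auto intro: walk.intros)

lemma walk_mono: "walk E S u v n \<Longrightarrow> S \<subseteq> T \<Longrightarrow> walk E T u v n"
  by (induct rule: walk.induct) (auto intro: walk.intros)

lemma walk_map:
  assumes "walk E S u v n" and "\<And>a b. a \<in> S \<Longrightarrow> b \<in> S \<Longrightarrow> E a b \<Longrightarrow> E' (g a) (g b)"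
    and "g ` S \<subseteq> T"
  shows "walk E' T (g u) (g v) n"
  using assms
proof (induct rule: walk.induct)
  case (walk_step u w v n)
  then show ?case using walk_endpoints[OF walk_step(3)] by (auto intro!: walk.intros)
qed (auto intro: walk.intros)

lemma walk_sym:
  assumes sym: "\<And>a b. E a b \<Longrightarrow> E b a" and "walk E S u v n"
  shows "walk E S v u n"
  using assms(2)
proof (induct rule: walk.induct)
  case (walk_step u w v n)
  have "walk E S w u 1" using walk_step sym by (auto intro!: walk.intros dest: walk_endpoints)
  from walk_trans[OF walk_step(4) this] show ?case by simp
qed (auto intro: walk.intros)

lemma walk_0_eq: "walk E S u v 0 \<Longrightarrow> u = v"
  by (erule walk.cases) auto

lemma walk_1_adj: "walk E S u v 1 \<Longrightarrow> E u v"
  by (erule walk.cases) (auto dest: walk_0_eq)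

definition walk_list :: "('a \<Rightarrow> 'a \<Rightarrow> bool) \<Rightarrow> 'a set \<Rightarrow> 'a list \<Rightarrow> bool" where
  "walk_list E S ps \<longleftrightarrow> set ps \<subseteq> S \<and> (\<forall>i. Suc i < length ps \<longrightarrow> E (ps ! i) (ps ! Suc i))"

lemma walk_list_walk:
  assumes "walk_list E S ps" and "a \<le> b" and "b < length ps"
  shows "walk E S (ps ! a) (ps ! b) (b - a)"
proof -
  have "walk E S (ps ! a) (ps ! (a + d)) d" if "a + d < length ps" for d
    using that
  proof (induct d arbitrary: a)
    case 0
    then have "ps ! a \<in> S" using assms(1) nth_mem[of a ps] by (auto simp: walk_list_def)
    then show ?case by (simp add: walk_refl)
  next
    case (Suc d)
    then have "walk E S (ps ! Suc a) (ps ! (Suc a + d)) d" using Suc.hyps[of "Suc a"] by simp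
    moreover have "ps ! a \<in> S" "E (ps ! a) (ps ! Suc a)"
      using Suc.prems assms(1) by (auto simp: walk_list_def)
    ultimately show ?case by (auto intro: walk_step)
  qed
  from this[of "b - a"] show ?thesis using assms(2,3) by simp
qed

lemma walk_len_iff_walk_list:
  "walk_len E S u v n \<longleftrightarrow> (\<exists>ps. length ps = Suc n \<and> hd ps = u \<and> last ps = v \<and> walk_list E S ps)"
  unfolding walk_len_def walk_list_def by auto

lemma walk_len_iff_walk: "walk_len E S u v n \<longleftrightarrow> walk E S u v n"
proof
  assume "walk_len E S u v n"
  then obtain ps where ps: "length ps = Suc n" "hd ps = u" "last ps = v" "walk_list E S ps"
    by (auto simp: walk_len_iff_walk_list)
  moreover have "ps \<noteq> []" using ps(1) by auto
  ultimately have "ps ! 0 = u" "ps ! n = v" by (auto simp: hd_conv_nth last_conv_nth)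
  with walk_list_walk[OF ps(4), of 0 n] ps(1) show "walk E S u v n" by simp
next
  assume "walk E S u v n"
  then show "walk_len E S u v n"
  proof (induct rule: walk.induct)
    case (walk_refl u)
    then show ?case unfolding walk_len_def by (intro exI[of _ "[u]"]) auto
  next
    case (walk_step u w v n)
    then obtain ps where ps: "length ps = Suc n" "hd ps = w" "last ps = v" "set ps \<subseteq> S"
        "\<forall>i<n. E (ps ! i) (ps ! Suc i)"
      by (auto simp: walk_len_def)
    moreover have "ps \<noteq> []" using ps(1) by auto
    ultimately have "ps ! 0 = w" by (simp add: hd_conv_nth)
    with ps walk_step show ?case unfolding walk_len_def
      by (intro exI[of _ "u # ps"]) (auto simp: nth_Cons split: nat.splits)
  qed
qed

lemma dist_in_eqI:
  assumes "walk E S u v n" and "\<And>m. walk E S u v m \<Longrightarrow> n \<le> m"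
  shows "dist_in E S u v = n"
  unfolding dist_in_def walk_len_iff_walk using assms by (intro Least_equality)

definition induced_path :: "('a \<Rightarrow> 'a \<Rightarrow> bool) \<Rightarrow> 'a set \<Rightarrow> 'a list \<Rightarrow> bool" where
  "induced_path E S ps \<longleftrightarrow> ps \<noteq> [] \<and> walk_list E S ps \<and> distinct ps \<and>
     (\<forall>a b. a < length ps \<longrightarrow> b < length ps \<longrightarrow> E (ps ! a) (ps ! b) \<longrightarrow> a = Suc b \<or> b = Suc a)"

definition geodesic :: "('a \<Rightarrow> 'a \<Rightarrow> bool) \<Rightarrow> 'a set \<Rightarrow> 'a list \<Rightarrow> bool" where
  "geodesic E S ps \<longleftrightarrow> (\<forall>m. walk E S (hd ps) (last ps) m \<longrightarrow> length ps - 1 \<le> m)"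

lemma induced_path_hd_last:
  "induced_path E S ps \<Longrightarrow> hd ps = ps ! 0 \<and> last ps = ps ! (length ps - 1)"
  by (simp add: induced_path_def hd_conv_nth last_conv_nth)

lemma walk_inside_induced_path:
  "walk E T u v m \<Longrightarrow> induced_path E S ps \<Longrightarrow> T \<subseteq> set ps \<Longrightarrow> a < length ps \<Longrightarrow> u = ps ! a
   \<Longrightarrow> b < length ps \<Longrightarrow> v = ps ! b \<Longrightarrow> b \<le> a + m"
proof (induct arbitrary: a rule: walk.induct)
  case (walk_refl u)
  then show ?case by (auto simp: induced_path_def nth_eq_iff_index_eq)
next
  case (walk_step u w v n)
  from walk_endpoints[OF walk_step(3)] walk_step(6) obtain c where c: "c < length ps" "w = ps ! c"
    by (metis in_set_conv_nth subsetD)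
  have "b \<le> c + n" using walk_step c by auto
  moreover have "a = Suc c \<or> c = Suc a" using walk_step c unfolding induced_path_def by auto
  ultimately show ?case by auto
qed

lemma walk_list_connected:
  assumes sym: "\<And>a b. E a b \<Longrightarrow> E b a" and "walk_list E S ps"
  shows "connected_in E (set ps)"
  unfolding connected_in_def walk_len_iff_walk
proof (intro ballI)
  have ps: "walk_list E (set ps) ps" using assms(2) by (auto simp: walk_list_def)
  fix u v assume "u \<in> set ps" "v \<in> set ps"
  then obtain a b where ab: "a < length ps" "b < length ps" "u = ps ! a" "v = ps ! b"
    by (auto simp: in_set_conv_nth)
  show "\<exists>n. walk E (set ps) u v n"
  proof (cases "a \<le> b")
    case True
    then show ?thesis using walk_list_walk[OF ps True ab(2)] ab by auto
  next
    case False
    then show ?thesis using walk_sym[OF sym walk_list_walk[OF ps _ ab(1), of b]] ab by auto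
  qed
qed

lemma distance_hereditary_induced_path_geodesic:
  assumes dh: "distance_hereditary V E" and sym: "\<And>a b. E a b \<Longrightarrow> E b a"
    and ip: "induced_path E V ps"
  shows "geodesic E V ps"
  unfolding geodesic_def
proof (intro allI impI)
  define k where "k = length ps - 1"
  have ps: "walk_list E V ps" "ps \<noteq> []" using ip by (auto simp: induced_path_def)
  then have "walk_list E (set ps) ps" "set ps \<subseteq> V" by (auto simp: walk_list_def)
  have k: "k < length ps" using ps(2) by (simp add: k_def)
  have ends: "hd ps = ps ! 0" "last ps = ps ! k" using induced_path_hd_last[OF ip] by (simp_all add: k_def)
  have "dist_in E (set ps) (ps ! 0) (ps ! k) = k"
  proof (rule dist_in_eqI)
    show "walk E (set ps) (ps ! 0) (ps ! k) k"
      using walk_list_walk[OF \<open>walk_list E (set ps) ps\<close> _ k, of 0] by simp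
    show "k \<le> m" if "walk E (set ps) (ps ! 0) (ps ! k) m" for m
      using walk_inside_induced_path[OF that ip subset_refl, of 0 k] ps(2) k by simp
  qed
  moreover have "dist_in E (set ps) (ps ! 0) (ps ! k) = dist_in E V (ps ! 0) (ps ! k)"
    using dh \<open>set ps \<subseteq> V\<close> walk_list_connected[OF sym ps(1)] k ps(2)
    unfolding distance_hereditary_def by auto
  moreover fix m assume "walk E V (hd ps) (last ps) m"
  then have "dist_in E V (ps ! 0) (ps ! k) \<le> m"
    unfolding dist_in_def walk_len_iff_walk ends by (rule Least_le)
  ultimately show "length ps - 1 \<le> m" by (simp add: k_def)
qed

lemma shortest_walk_list_induced_path:
  assumes sym: "\<And>a b. E a b \<Longrightarrow> E b a" and irrefl: "\<And>a. \<not> E a a"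
    and ps: "walk_list E S ps" "length ps = Suc n"
    and shortest: "\<And>m. m < n \<Longrightarrow> \<not> walk E S (ps ! 0) (ps ! n) m"
  shows "induced_path E S ps"
proof -
  have shortcut: "walk E S (ps ! 0) (ps ! n) (a + d + (n - b))"
    if "a < b" "b < length ps" "walk E S (ps ! a) (ps ! b) d" for a b d
  proof -
    have prefix: "walk E S (ps ! 0) (ps ! a) a" using walk_list_walk[OF ps(1), of 0 a] that by simp
    have suffix: "walk E S (ps ! b) (ps ! n) (n - b)"
      using walk_list_walk[OF ps(1), of b n] that ps(2) by simp
    from walk_trans[OF walk_trans[OF prefix that(3)] suffix] show ?thesis .
  qed
  have "distinct ps"
  proof (rule ccontr)
    assume "\<not> distinct ps"
    then obtain a b where ab: "a < b" "b < length ps" "ps ! a = ps ! b"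
      by (metis distinct_conv_nth linorder_neqE_nat)
    moreover have "ps ! b \<in> S" using ab(2) ps(1) nth_mem[of b ps] by (auto simp: walk_list_def)
    ultimately have "walk E S (ps ! a) (ps ! b) 0" by (simp add: walk_refl)
    from shortcut[OF ab(1,2) this] have "walk E S (ps ! 0) (ps ! n) (a + 0 + (n - b))" .
    moreover have "a + 0 + (n - b) < n" using ab ps(2) by simp
    ultimately show False using shortest by blast
  qed
  moreover have no_chord: "b = Suc a" if "a < b" "b < length ps" "E (ps ! a) (ps ! b)" for a b
  proof (rule ccontr)
    assume "b \<noteq> Suc a"
    have "ps ! a \<in> S" "ps ! b \<in> S" using ps(1) that by (auto simp: walk_list_def)
    then have "walk E S (ps ! a) (ps ! b) 1" using that(3) by (auto intro!: walk.intros)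
    from shortcut[OF that(1,2) this] have "walk E S (ps ! 0) (ps ! n) (a + 1 + (n - b))" .
    moreover have "a + 1 + (n - b) < n" using that \<open>b \<noteq> Suc a\<close> ps(2) by simp
    ultimately show False using shortest by blast
  qed
  moreover have "a = Suc b \<or> b = Suc a"
    if "a < length ps" "b < length ps" "E (ps ! a) (ps ! b)" for a b
  proof (cases a b rule: linorder_cases)
    case less
    then show ?thesis using no_chord that by blast
  next
    case equal
    then show ?thesis using irrefl that by blast
  next
    case greater
    then show ?thesis using no_chord[of b a] sym that by blast
  qed
  ultimately show ?thesis using ps unfolding induced_path_def by auto
qed

lemma sublist_hd_last_length:
  assumes "a \<le> b" "b < length ps"
  shows "hd (drop a (take (Suc b) ps)) = ps ! a" "last (drop a (take (Suc b) ps)) = ps ! b"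
    and "length (drop a (take (Suc b) ps)) = Suc (b - a)"
  using assms by (simp_all add: hd_drop_conv_nth last_conv_nth)

lemma induced_path_sublist:
  assumes ip: "induced_path E S ps" and ab: "a \<le> b" "b < length ps"
  shows "induced_path E S (drop a (take (Suc b) ps))"
proof -
  let ?q = "drop a (take (Suc b) ps)"
  have len: "length ?q = Suc (b - a)" using ab by simp
  have nth: "?q ! i = ps ! (a + i)" if "i < length ?q" for i using that ab by simp
  have "set ?q \<subseteq> set ps" by (meson order_trans set_drop_subset set_take_subset)
  moreover have "E (?q ! i) (?q ! Suc i)" if "Suc i < length ?q" for i
    using ip nth[of i] nth[of "Suc i"] that len ab unfolding induced_path_def walk_list_def by auto
  moreover have "i = Suc j \<or> j = Suc i"
    if "i < length ?q" "j < length ?q" "E (?q ! i) (?q ! j)" for i j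
  proof -
    have "a + i < length ps" "a + j < length ps" using that len ab by linarith+
    moreover have "E (ps ! (a + i)) (ps ! (a + j))" using that nth by simp
    ultimately have "a + i = Suc (a + j) \<or> a + j = Suc (a + i)"
      using ip unfolding induced_path_def by blast
    then show ?thesis by linarith
  qed
  moreover have "distinct ?q" using ip by (simp add: induced_path_def)
  ultimately show ?thesis using ip len unfolding induced_path_def walk_list_def by auto
qed

lemma short_induced_path_geodesic:
  assumes ip: "induced_path E S ps" and short: "length ps \<le> 3"
  shows "geodesic E S ps"
  unfolding geodesic_def
proof (intro allI impI)
  define k where "k = length ps - 1"
  have k: "k < length ps" "hd ps = ps ! 0" "last ps = ps ! k"
    using ip induced_path_hd_last[OF ip] by (auto simp: k_def induced_path_def)
  fix m assume w: "walk E S (hd ps) (last ps) m"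
  consider "m = 0" | "m = 1" | "2 \<le> m" by linarith
  then show "length ps - 1 \<le> m"
  proof cases
    case 1
    then have "ps ! 0 = ps ! k" using walk_0_eq w k by metis
    then have "k = 0" using ip k(1) by (simp add: induced_path_def nth_eq_iff_index_eq)
    then show ?thesis by (simp add: k_def)
  next
    case 2
    then have "E (ps ! 0) (ps ! k)" using walk_1_adj w k by metis
    then have "k = 1" using ip k(1) unfolding induced_path_def by force
    then show ?thesis using 2 by (simp add: k_def)
  next
    case 3
    then show ?thesis using short by simp
  qed
qed

lemma distance_hereditaryI:
  assumes sym: "\<And>a b. E a b \<Longrightarrow> E b a" and irrefl: "\<And>a. \<not> E a a"
    and geo: "\<And>ps. induced_path E V ps \<Longrightarrow> geodesic E V ps"
  shows "distance_hereditary V E"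
  unfolding distance_hereditary_def
proof (intro allI impI ballI)
  fix S u v assume S: "S \<subseteq> V" and "connected_in E S" and uv: "u \<in> S" "v \<in> S"
  then have "\<exists>n. walk E S u v n" unfolding connected_in_def walk_len_iff_walk by blast
  define n where "n = (LEAST n. walk E S u v n)"
  have wn: "walk E S u v n" unfolding n_def using \<open>\<exists>n. walk E S u v n\<close> by (rule LeastI_ex)
  then obtain ps where ps: "length ps = Suc n" "hd ps = u" "last ps = v" "walk_list E S ps"
    unfolding walk_len_iff_walk[symmetric] walk_len_iff_walk_list by blast
  moreover have "ps \<noteq> []" using ps(1) by auto
  ultimately have "ps ! 0 = u" "ps ! n = v" by (auto simp: hd_conv_nth last_conv_nth)
  moreover have "\<not> walk E S u v m" if "m < n" for m
    using not_less_Least[OF that[unfolded n_def]] n_def by simp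
  ultimately have "induced_path E S ps"
    using shortest_walk_list_induced_path[OF sym irrefl ps(4,1)] by simp
  then have "induced_path E V ps" using S unfolding induced_path_def walk_list_def by blast
  then have "n \<le> m" if "walk E V u v m" for m
    using geo[OF \<open>induced_path E V ps\<close>] that ps(1-3) unfolding geodesic_def by auto
  then have "dist_in E V u v = n" using walk_mono[OF wn S] by (intro dist_in_eqI)
  moreover have "dist_in E S u v = n" unfolding dist_in_def walk_len_iff_walk n_def ..
  ultimately show "dist_in E S u v = dist_in E V u v" by simp
qed

section \<open>Maximal bicliques and the incidence graph\<close>

lemma Gamma_adj_iff:
  "Gamma_adj V I F u w \<longleftrightarrow>
     (\<exists>x i. (u = Inl x \<and> w = Inr i \<or> u = Inr i \<and> w = Inl x) \<and> x \<in> V \<and> i \<in> I \<and> x \<in> F i)"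
  by (cases u; cases w) auto

locale bipartite =
  fixes X Y :: "'a set" and E :: "'a \<Rightarrow> 'a \<Rightarrow> bool"
  assumes bipartite: "bipartite_graph X Y E"
begin

abbreviation "MB \<equiv> max_bicliques X Y E"
abbreviation "\<Gamma>V \<equiv> Inl ` X \<union> Inr ` MB"
abbreviation "\<Gamma>E \<equiv> Gamma_adj X MB (\<lambda>B. B \<inter> X)"

lemma finite_X: "finite X" and finite_Y: "finite Y" and disjoint: "X \<inter> Y = {}"
  and E_sym: "E u v \<Longrightarrow> E v u"
  and E_sides: "E u v \<Longrightarrow> (u \<in> X \<and> v \<in> Y) \<or> (u \<in> Y \<and> v \<in> X)"
  using bipartite unfolding bipartite_graph_def by auto

lemma max_biclique_adj: "B \<in> MB \<Longrightarrow> x \<in> B \<Longrightarrow> x \<in> X \<Longrightarrow> y \<in> B \<Longrightarrow> y \<in> Y \<Longrightarrow> E x y"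
  unfolding max_bicliques_def biclique_def by blast

lemma max_biclique_meets_Y: "B \<in> MB \<Longrightarrow> \<exists>y. y \<in> B \<and> y \<in> Y"
  unfolding max_bicliques_def biclique_def by blast

lemma finite_bicliques: "finite {B. biclique X Y E B}"
proof (rule finite_subset)
  show "{B. biclique X Y E B} \<subseteq> Pow (X \<union> Y)" unfolding biclique_def by blast
qed (use finite_X finite_Y in simp)

lemma finite_max_bicliques: "finite MB"
proof (rule finite_subset[OF _ finite_bicliques])
  show "MB \<subseteq> {B. biclique X Y E B}" unfolding max_bicliques_def by blast
qed

lemma biclique_extends_to_max_biclique:
  assumes "biclique X Y E B0"
  obtains B where "B \<in> MB" "B0 \<subseteq> B"
proof -
  have "B0 \<in> {B. biclique X Y E B}" using assms by simp
  from finite_has_maximal2[OF finite_bicliques this]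
  obtain B where B: "biclique X Y E B" "B0 \<subseteq> B"
    and maximal: "\<forall>B'\<in>{B. biclique X Y E B}. B \<subseteq> B' \<longrightarrow> B = B'"
    by auto
  have "B \<in> MB"
    unfolding max_bicliques_def
  proof (intro CollectI conjI notI)
    show "biclique X Y E B" by fact
    assume "\<exists>B'. biclique X Y E B' \<and> B \<subset> B'"
    then obtain B' where "biclique X Y E B'" "B \<subset> B'" by blast
    with maximal show False by blast
  qed
  then show thesis using B(2) by (rule that)
qed

lemma max_biclique_nonadj:
  assumes B: "B \<in> MB" and x: "x \<in> X" "x \<notin> B"
  obtains y where "y \<in> B" "y \<in> Y" "\<not> E x y"
proof (rule ccontr)
  assume "\<not> thesis"
  then have "\<forall>y \<in> B \<inter> Y. E x y" using that by blast
  moreover have "x \<notin> Y" using x disjoint by auto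
  moreover have "biclique X Y E B" using B by (simp add: max_bicliques_def)
  ultimately have "biclique X Y E (insert x B)" using x unfolding biclique_def by auto
  moreover have "B \<subset> insert x B" using x by auto
  ultimately show False using B unfolding max_bicliques_def by blast
qed

lemma common_neighbour_walk2:
  assumes "x \<in> X" "x' \<in> X" "y \<in> Y" "E x y" "E x' y"
  shows "walk \<Gamma>E \<Gamma>V (Inl x) (Inl x') 2"
proof -
  have "x \<notin> Y" "x' \<notin> Y" "y \<notin> X" using assms disjoint by auto
  then have "biclique X Y E {x, x', y}" using assms unfolding biclique_def by auto
  then obtain B where B: "B \<in> MB" "{x, x', y} \<subseteq> B" by (rule biclique_extends_to_max_biclique)
  have "walk \<Gamma>E \<Gamma>V (Inr B) (Inl x') 1" using B assms by (auto intro!: walk.intros)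
  moreover have "\<Gamma>E (Inl x) (Inr B)" "Inl x \<in> \<Gamma>V" using B assms by auto
  ultimately have "walk \<Gamma>E \<Gamma>V (Inl x) (Inl x') (Suc 1)" by (blast intro: walk_step)
  then show ?thesis by (simp add: numeral_2_eq_2)
qed

end

section \<open>Induced paths of the incidence graph\<close>

locale BDH_graph = bipartite +
  assumes distance_hereditary: "distance_hereditary (X \<union> Y) E"

text \<open>The inductive step of the proof that induced paths of the incidence graph are geodesics:
  a path of length \<open>k \<ge> 3\<close> whose proper subpaths are already known to be geodesics.\<close>
locale Gamma_path = BDH_graph +
  fixes ps :: "('a + 'a set) list" and k :: nat
  assumes induced: "induced_path \<Gamma>E \<Gamma>V ps"
    and length_ps: "length ps = Suc k"
    and long: "3 \<le> k"
    and subpaths_geodesic: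
      "\<And>a b m. a \<le> b \<Longrightarrow> b \<le> k \<Longrightarrow> b - a < k \<Longrightarrow> walk \<Gamma>E \<Gamma>V (ps ! a) (ps ! b) m \<Longrightarrow> b - a \<le> m"
begin

lemma path_in_\<Gamma>V: "i \<le> k \<Longrightarrow> ps ! i \<in> \<Gamma>V"
proof -
  assume "i \<le> k"
  then have "ps ! i \<in> set ps" using length_ps by simp
  then show ?thesis using induced unfolding induced_path_def walk_list_def by blast
qed

lemma path_adj: "Suc i \<le> k \<Longrightarrow> \<Gamma>E (ps ! i) (ps ! Suc i)"
  using induced length_ps unfolding induced_path_def walk_list_def by auto

lemma path_no_chord: "a \<le> k \<Longrightarrow> b \<le> k \<Longrightarrow> \<Gamma>E (ps ! a) (ps ! b) \<Longrightarrow> a = Suc b \<or> b = Suc a"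
  using induced length_ps unfolding induced_path_def by auto

lemma path_distinct: "a \<le> k \<Longrightarrow> b \<le> k \<Longrightarrow> ps ! a = ps ! b \<Longrightarrow> a = b"
  using induced length_ps unfolding induced_path_def by (simp add: nth_eq_iff_index_eq)

lemma path_Inl_in_X: "l \<le> k \<Longrightarrow> ps ! l = Inl x \<Longrightarrow> x \<in> X"
  using path_in_\<Gamma>V[of l] by auto

lemma path_Inr_in_MB: "l \<le> k \<Longrightarrow> ps ! l = Inr B \<Longrightarrow> B \<in> MB"
  using path_in_\<Gamma>V[of l] by auto

lemma succ_of_Inr:
  assumes "i < k" "ps ! i = Inr B"
  obtains x where "ps ! Suc i = Inl x" "x \<in> X" "x \<in> B"
  using path_adj[of i] assms by (auto simp: Gamma_adj_iff)

lemma pred_of_Inr: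
  assumes "0 < i" "i \<le> k" "ps ! i = Inr B"
  obtains x where "ps ! (i - 1) = Inl x" "x \<in> X" "x \<in> B"
  using path_adj[of "i - 1"] assms by (auto simp: Gamma_adj_iff)

lemma Inl_succ_not_Inl: "Suc j \<le> k \<Longrightarrow> ps ! j = Inl x \<Longrightarrow> ps ! Suc j \<noteq> Inl x'"
  using path_adj[of j] by (auto simp: Gamma_adj_iff)

lemma common_neighbour_close:
  assumes "a \<le> b" "b \<le> k" "b - a < k" "ps ! a = Inl x" "ps ! b = Inl x'"
    and "y \<in> Y" "E x y" "E x' y"
  shows "b - a \<le> 2"
proof -
  have "x \<in> X" "x' \<in> X" using assms path_Inl_in_X[of a x] path_Inl_in_X[of b x'] by auto
  then have "walk \<Gamma>E \<Gamma>V (ps ! a) (ps ! b) 2" using common_neighbour_walk2 assms by simp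
  then show ?thesis using subpaths_geodesic assms(1-3) by blast
qed

lemma chord_after:
  assumes i: "i \<le> k" "ps ! i = Inr B" and y: "y \<in> B" "y \<in> Y"
    and l: "l \<le> k" "ps ! l = Inl x" "E y x" and after: "Suc i < l"
  shows "l = i + 3 \<and> (i = 0 \<or> (i = 1 \<and> k = 4))"
proof -
  have B: "B \<in> MB" using path_Inr_in_MB i by blast
  have Exy: "E x y" using E_sym l(3) .
  have "i < k" using after l by auto
  then obtain x1 where x1: "ps ! Suc i = Inl x1" "x1 \<in> X" "x1 \<in> B" using succ_of_Inr i(2) by blast
  have "E x1 y" using max_biclique_adj[OF B x1(3) x1(2) y] .
  then have "l - Suc i \<le> 2"
    using common_neighbour_close[of "Suc i" l x1 x y] after l x1 Exy y by auto
  moreover have "l \<noteq> Suc (Suc i)" using Inl_succ_not_Inl[of "Suc i" x1 x] x1 l by auto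
  ultimately have l3: "l = i + 3" using after by linarith
  have "i = 0 \<or> (i = 1 \<and> k = 4)"
  proof (rule ccontr)
    assume h: "\<not> (i = 0 \<or> (i = 1 \<and> k = 4))"
    then obtain x0 where x0: "ps ! (i - 1) = Inl x0" "x0 \<in> X" "x0 \<in> B"
      using pred_of_Inr i by blast
    have "E x0 y" using max_biclique_adj[OF B x0(3) x0(2) y] .
    moreover have "l - (i - 1) < k" using h l3 l(1) by linarith
    ultimately have "l - (i - 1) \<le> 2"
      using common_neighbour_close[of "i - 1" l x0 x y] l x0 Exy y l3 by auto
    then show False using l3 h by linarith
  qed
  with l3 show ?thesis ..
qed

lemma chord_before:
  assumes i: "i \<le> k" "ps ! i = Inr B" and y: "y \<in> B" "y \<in> Y"
    and l: "l \<le> k" "ps ! l = Inl x" "E y x" and before: "Suc l < i"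
  shows "l = i - 3 \<and> 3 \<le> i"
proof -
  have B: "B \<in> MB" using path_Inr_in_MB i by blast
  have Exy: "E x y" using E_sym l(3) .
  obtain x0 where x0: "ps ! (i - 1) = Inl x0" "x0 \<in> X" "x0 \<in> B"
    using pred_of_Inr[of i B] i before by auto
  have "E x0 y" using max_biclique_adj[OF B x0(3) x0(2) y] .
  then have "(i - 1) - l \<le> 2"
    using common_neighbour_close[of l "i - 1" x x0 y] before i l x0 Exy y by auto
  moreover have "l \<noteq> i - 2"
  proof
    assume "l = i - 2"
    then have "Suc l = i - 1" using before by simp
    then show False using Inl_succ_not_Inl[of l x x0] x0(1) l(1,2) before i(1) by simp
  qed
  ultimately show ?thesis using before by linarith
qed

text \<open>By the two lemmas above, a vertex \<open>y \<in> B \<inter> Y\<close> for the biclique \<open>B\<close> at position \<open>i\<close>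
  can be adjacent to at most one path vertex of \<open>X\<close> besides the path neighbours of \<open>B\<close>,
  namely the one at position \<open>chord_pos i\<close>.\<close>
definition chord_pos :: "nat \<Rightarrow> nat" where
  "chord_pos i = (if i = 0 \<or> (i = 1 \<and> k = 4) then i + 3 else i - 3)"

lemma chord_at_chord_pos:
  assumes i: "i \<le> k" "ps ! i = Inr B" and y: "y \<in> B" "y \<in> Y"
    and l: "l \<le> k" "ps ! l = Inl x" "E y x" and chord: "l \<noteq> Suc i" "i \<noteq> Suc l"
  shows "l = chord_pos i"
proof -
  have "l \<noteq> i" using i l by auto
  then consider "Suc i < l" | "Suc l < i" using chord by linarith
  then show ?thesis
  proof cases
    case 1
    then show ?thesis using chord_after[OF i y l 1] unfolding chord_pos_def by auto
  next
    case 2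
    then show ?thesis using chord_before[OF i y l 2] unfolding chord_pos_def by auto
  qed
qed

definition faithful :: "'a set \<Rightarrow> 'a \<Rightarrow> bool" where
  "faithful B y \<longleftrightarrow> (\<forall>i\<le>k. ps ! i = Inr B \<longrightarrow>
     (\<forall>l\<le>k. \<forall>x. ps ! l = Inl x \<longrightarrow> E y x \<longrightarrow> l = Suc i \<or> i = Suc l))"

lemma chord_pos_avoidable:
  assumes i: "i \<le> k" "ps ! i = Inr B"
  obtains y where "y \<in> B" "y \<in> Y"
    and "\<And>x. chord_pos i \<le> k \<Longrightarrow> ps ! chord_pos i = Inl x \<Longrightarrow> chord_pos i \<noteq> Suc i
      \<Longrightarrow> i \<noteq> Suc (chord_pos i) \<Longrightarrow> \<not> E y x"
proof -
  have B: "B \<in> MB" using path_Inr_in_MB i .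
  let ?l = "chord_pos i"
  show thesis
  proof (cases "?l \<le> k \<and> (\<exists>x. ps ! ?l = Inl x) \<and> ?l \<noteq> Suc i \<and> i \<noteq> Suc ?l")
    case True
    then obtain x where x: "?l \<le> k" "ps ! ?l = Inl x" "?l \<noteq> Suc i" "i \<noteq> Suc ?l" by blast
    then have "x \<in> X" using path_Inl_in_X by blast
    moreover have "x \<notin> B"
    proof
      assume "x \<in> B"
      then have "\<Gamma>E (ps ! ?l) (ps ! i)" using x i B \<open>x \<in> X\<close> by simp
      then show False using path_no_chord[OF x(1) i(1)] x(3,4) by auto
    qed
    ultimately obtain y where y: "y \<in> B" "y \<in> Y" "\<not> E x y" by (rule max_biclique_nonadj[OF B])
    show thesis
    proof (rule that[OF y(1,2)])
      fix x' assume "?l \<le> k" "ps ! ?l = Inl x'" "?l \<noteq> Suc i" "i \<noteq> Suc ?l"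
      then have "x' = x" using x(2) by simp
      then show "\<not> E y x'" using y(3) E_sym by blast
    qed
  next
    case False
    obtain y where "y \<in> B" "y \<in> Y" using max_biclique_meets_Y[OF B] by blast
    then show thesis using that False by blast
  qed
qed

lemma faithful_exists:
  assumes B: "B \<in> MB"
  obtains y where "y \<in> B" "y \<in> Y" "faithful B y"
proof (cases "\<exists>i\<le>k. ps ! i = Inr B")
  case False
  obtain y where "y \<in> B" "y \<in> Y" using max_biclique_meets_Y[OF B] by blast
  with False show thesis by (intro that) (auto simp: faithful_def)
next
  case True
  then obtain i where i: "i \<le> k" "ps ! i = Inr B" by blast
  obtain y where y: "y \<in> B" "y \<in> Y"
    and avoid: "\<And>x. chord_pos i \<le> k \<Longrightarrow> ps ! chord_pos i = Inl x \<Longrightarrow> chord_pos i \<noteq> Suc i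
      \<Longrightarrow> i \<noteq> Suc (chord_pos i) \<Longrightarrow> \<not> E y x"
    using chord_pos_avoidable[OF i] by blast
  have "faithful B y" unfolding faithful_def
  proof (intro allI impI)
    fix i' l x assume h: "i' \<le> k" "ps ! i' = Inr B" "l \<le> k" "ps ! l = Inl x" "E y x"
    have "i' = i" using path_distinct[OF h(1) i(1)] h(2) i(2) by simp
    show "l = Suc i' \<or> i' = Suc l"
    proof (rule ccontr)
      assume chord: "\<not> (l = Suc i' \<or> i' = Suc l)"
      then have "l = chord_pos i" using chord_at_chord_pos[OF i y h(3-5)] \<open>i' = i\<close> by auto
      then show False using avoid[of x] h chord \<open>i' = i\<close> by auto
    qed
  qed
  with y show thesis by (rule that)
qed

definition rep :: "'a set \<Rightarrow> 'a" where
  "rep B = (SOME y. y \<in> B \<and> y \<in> Y \<and> faithful B y)"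

lemma rep:
  assumes "B \<in> MB"
  shows "rep B \<in> B" "rep B \<in> Y" "faithful B (rep B)"
proof -
  obtain y where "y \<in> B \<and> y \<in> Y \<and> faithful B y" using faithful_exists[OF assms] by blast
  then have "rep B \<in> B \<and> rep B \<in> Y \<and> faithful B (rep B)" unfolding rep_def by (rule someI)
  then show "rep B \<in> B" "rep B \<in> Y" "faithful B (rep B)" by auto
qed

lemma rep_no_chord:
  assumes "i \<le> k" "ps ! i = Inr B" "l \<le> k" "ps ! l = Inl x" "E (rep B) x"
  shows "l = Suc i \<or> i = Suc l"
  using rep(3)[OF path_Inr_in_MB[OF assms(1,2)]] assms unfolding faithful_def by blast

lemma shared_rep_no_chord:
  assumes "i \<le> k" "ps ! i = Inr B" "j \<le> k" "ps ! j = Inr B'" "rep B = rep B'"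
    and "l \<le> k" "ps ! l = Inl x" "x \<in> B"
  shows "l = Suc j \<or> j = Suc l"
proof -
  have B: "B \<in> MB" using path_Inr_in_MB assms(1,2) .
  have "x \<in> X" using path_Inl_in_X assms(6,7) .
  then have "E x (rep B)" using max_biclique_adj[OF B assms(8)] rep(1,2)[OF B] by blast
  then show ?thesis using rep_no_chord[of j B' l x] E_sym assms by auto
qed

lemma rep_injective_on_path:
  assumes i: "i < j" "ps ! i = Inr B" and j: "j \<le> k" "ps ! j = Inr B'" and eq: "rep B = rep B'"
  shows False
proof -
  have "i < k" using i j by simp
  then obtain x1 where "ps ! Suc i = Inl x1" "x1 \<in> B" using succ_of_Inr i(2) by blast
  then have j2: "j = i + 2"
    using shared_rep_no_chord[of i B j B' "Suc i" x1] i j eq by auto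
  have "j = k"
  proof (rule ccontr)
    assume "j \<noteq> k"
    then have "j < k" using j(1) by simp
    then obtain x2 where "ps ! Suc j = Inl x2" "x2 \<in> B'" using succ_of_Inr j(2) by blast
    then show False using shared_rep_no_chord[of j B' i B "Suc j" x2] \<open>j < k\<close> i j eq by auto
  qed
  moreover have "i = 0"
  proof (rule ccontr)
    assume "i \<noteq> 0"
    then obtain x0 where "ps ! (i - 1) = Inl x0" "x0 \<in> B" using pred_of_Inr[of i B] i j by auto
    moreover have "i - 1 \<le> k" using i j by linarith
    ultimately show False using shared_rep_no_chord[of i B j B' "i - 1" x0] i j eq j2 by auto
  qed
  ultimately show False using j2 long by simp
qed

definition proj :: "'a + 'a set \<Rightarrow> 'a" where
  "proj w = (case w of Inl x \<Rightarrow> x | Inr B \<Rightarrow> rep B)"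

lemma proj_adj:
  assumes "\<Gamma>E u w"
  shows "E (proj u) (proj w)"
proof -
  from assms obtain x B where xB: "u = Inl x \<and> w = Inr B \<or> u = Inr B \<and> w = Inl x"
    "x \<in> X" "B \<in> MB" "x \<in> B"
    by (auto simp: Gamma_adj_iff)
  have "E x (rep B)" using max_biclique_adj[OF xB(3,4,2)] rep(1,2)[OF xB(3)] by blast
  then show ?thesis using xB(1) E_sym by (auto simp: proj_def)
qed

lemma proj_\<Gamma>V: "proj ` \<Gamma>V \<subseteq> X \<union> Y"
  using rep(2) by (auto simp: proj_def)

lemma proj_Inl_Inr_distinct: "x \<in> X \<Longrightarrow> B \<in> MB \<Longrightarrow> proj (Inl x) \<noteq> proj (Inr B)"
  using rep(2)[of B] disjoint by (auto simp: proj_def)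

lemma proj_injective_on_path:
  assumes "i < j" "j \<le> k" shows "proj (ps ! i) \<noteq> proj (ps ! j)"
proof (cases "ps ! i"; cases "ps ! j")
  fix x x' assume "ps ! i = Inl x" "ps ! j = Inl x'"
  then show ?thesis using path_distinct[of i j] assms by (auto simp: proj_def)
next
  fix x B assume "ps ! i = Inl x" "ps ! j = Inr B"
  then show ?thesis using proj_Inl_Inr_distinct path_Inl_in_X[of i] path_Inr_in_MB[of j] assms
    by simp
next
  fix B x assume "ps ! i = Inr B" "ps ! j = Inl x"
  then show ?thesis using proj_Inl_Inr_distinct path_Inl_in_X[of j] path_Inr_in_MB[of i] assms
    by (metis less_imp_le order_trans)
next
  fix B B' assume "ps ! i = Inr B" "ps ! j = Inr B'"
  then show ?thesis using rep_injective_on_path assms by (auto simp: proj_def)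
qed

lemma proj_no_chord:
  assumes "a \<le> k" "b \<le> k" "E (proj (ps ! a)) (proj (ps ! b))"
  shows "a = Suc b \<or> b = Suc a"
proof (cases "ps ! a"; cases "ps ! b")
  fix x x' assume "ps ! a = Inl x" "ps ! b = Inl x'"
  then have "x \<in> X" "x' \<in> X" "E x x'" using path_Inl_in_X assms by (auto simp: proj_def)
  then show ?thesis using E_sides disjoint by blast
next
  fix x B assume "ps ! a = Inl x" "ps ! b = Inr B"
  then show ?thesis using rep_no_chord[of b B a x] E_sym assms by (auto simp: proj_def)
next
  fix B x assume "ps ! a = Inr B" "ps ! b = Inl x"
  then show ?thesis using rep_no_chord[of a B b x] assms by (auto simp: proj_def)
next
  fix B B' assume "ps ! a = Inr B" "ps ! b = Inr B'"
  then have "rep B \<in> Y" "rep B' \<in> Y" "E (rep B) (rep B')"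
    using path_Inr_in_MB rep(2) assms by (auto simp: proj_def)
  then show ?thesis using E_sides disjoint by blast
qed

lemma projected_path_induced: "induced_path E (X \<union> Y) (map proj ps)"
proof -
  have "set ps \<subseteq> \<Gamma>V" using induced by (simp add: induced_path_def walk_list_def)
  then have "proj ` set ps \<subseteq> proj ` \<Gamma>V" by (rule image_mono)
  then have "set (map proj ps) \<subseteq> X \<union> Y" using proj_\<Gamma>V by simp
  moreover have "E (map proj ps ! i) (map proj ps ! Suc i)" if "Suc i < length ps" for i
    using proj_adj path_adj that length_ps by simp
  moreover have "distinct (map proj ps)" unfolding distinct_conv_nth
  proof (intro allI impI)
    fix i j assume "i < length (map proj ps)" "j < length (map proj ps)" "i \<noteq> j"
    then show "map proj ps ! i \<noteq> map proj ps ! j"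
      using proj_injective_on_path[of i j] proj_injective_on_path[of j i] length_ps
      by (cases i j rule: linorder_cases) auto
  qed
  moreover have "a = Suc b \<or> b = Suc a"
    if "a < length ps" "b < length ps" "E (map proj ps ! a) (map proj ps ! b)" for a b
    using proj_no_chord[of a b] that length_ps by simp
  ultimately show ?thesis using length_ps unfolding induced_path_def walk_list_def by auto
qed

lemma path_geodesic: "geodesic \<Gamma>E \<Gamma>V ps"
  unfolding geodesic_def
proof (intro allI impI)
  fix m assume "walk \<Gamma>E \<Gamma>V (hd ps) (last ps) m"
  then have "walk E (X \<union> Y) (proj (hd ps)) (proj (last ps)) m"
    using proj_adj proj_\<Gamma>V by (rule walk_map)
  moreover have "ps \<noteq> []" using length_ps by auto
  ultimately have "walk E (X \<union> Y) (hd (map proj ps)) (last (map proj ps)) m"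
    by (simp add: hd_map last_map)
  then show "length ps - 1 \<le> m"
    using distance_hereditary_induced_path_geodesic[OF distance_hereditary E_sym projected_path_induced]
    unfolding geodesic_def by simp
qed

end

context BDH_graph
begin

lemma Gamma_induced_path_geodesic: "induced_path \<Gamma>E \<Gamma>V ps \<Longrightarrow> geodesic \<Gamma>E \<Gamma>V ps"
proof (induction "length ps" arbitrary: ps rule: less_induct)
  case less
  define k where "k = length ps - 1"
  have length_ps: "length ps = Suc k" using less.prems by (simp add: induced_path_def k_def)
  show ?case
  proof (cases "3 \<le> k")
    case True
    have "b - a \<le> m" if "a \<le> b" "b \<le> k" "b - a < k" "walk \<Gamma>E \<Gamma>V (ps ! a) (ps ! b) m" for a b m
    proof -
      let ?q = "drop a (take (Suc b) ps)"
      have "b < length ps" using that(2) length_ps by simp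
      note q = sublist_hd_last_length[OF that(1) this]
      have "geodesic \<Gamma>E \<Gamma>V ?q"
        using less.hyps induced_path_sublist[OF less.prems that(1) \<open>b < length ps\<close>] q(3) that(3) length_ps
        by simp
      then show ?thesis using that(4) q unfolding geodesic_def by simp
    qed
    then interpret Gamma_path X Y E ps k
      using less.prems length_ps True by unfold_locales
    show ?thesis by (rule path_geodesic)
  next
    case False
    then have "length ps \<le> 3" using length_ps by simp
    with less.prems show ?thesis by (rule short_induced_path_geodesic)
  qed
qed

lemma Gamma_BDH: "BDH (Inl ` X) (Inr ` MB) \<Gamma>E"
proof -
  have "distance_hereditary \<Gamma>V \<Gamma>E"
    by (rule distance_hereditaryI[OF _ _ Gamma_induced_path_geodesic]) (auto simp: Gamma_adj_iff)
  then show ?thesis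
    using finite_X finite_max_bicliques unfolding BDH_def bipartite_graph_def
    by (auto simp: Gamma_adj_iff)
qed

end

lemma BDH_swap: "BDH X Y E \<Longrightarrow> BDH Y X E"
  unfolding BDH_def bipartite_graph_def by (auto simp: Un_commute)

lemma max_bicliques_swap:
  assumes "\<And>u v. E u v \<Longrightarrow> E v u"
  shows "max_bicliques Y X E = max_bicliques X Y E"
proof -
  have "biclique Y X E B = biclique X Y E B" for B
    unfolding biclique_def using assms by blast
  then show ?thesis unfolding max_bicliques_def by simp
qed

lemma BDH_graph_of_BDH: "BDH X Y E \<Longrightarrow> BDH_graph X Y E"
  unfolding BDH_def by (simp add: BDH_graph_def bipartite_def BDH_graph_axioms_def)

theorem corollary1:
  fixes X Y :: "'a set" and E :: "'a \<Rightarrow> 'a \<Rightarrow> bool"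
  assumes "BDH X Y E"
    and "\<forall>v\<in>X \<union> Y. \<not> universal_vertex X Y E v"
  shows "BDH (Inl ` X) (Inr ` max_bicliques X Y E)
           (Gamma_adj X (max_bicliques X Y E) (\<lambda>B. B \<inter> X))
       \<and> BDH (Inl ` Y) (Inr ` max_bicliques X Y E)
           (Gamma_adj Y (max_bicliques X Y E) (\<lambda>B. B \<inter> Y))"
proof
  show "BDH (Inl ` X) (Inr ` max_bicliques X Y E) (Gamma_adj X (max_bicliques X Y E) (\<lambda>B. B \<inter> X))"
    using BDH_graph.Gamma_BDH[OF BDH_graph_of_BDH[OF assms(1)]] .
  have "\<And>u v. E u v \<Longrightarrow> E v u" using assms(1) unfolding BDH_def bipartite_graph_def by blast
  then show "BDH (Inl ` Y) (Inr ` max_bicliques X Y E) (Gamma_adj Y (max_bicliques X Y E) (\<lambda>B. B \<inter> Y))"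
    using BDH_graph.Gamma_BDH[OF BDH_graph_of_BDH[OF BDH_swap[OF assms(1)]]] max_bicliques_swap
    by metis
qed

end
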